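(* Let $\lambda\in\mathbb{C}$ and complex sequences $(p_l)_{l\in\mathbb{Z}},(q_m)_{m\in\mathbb{Z}}$ be given, with $p_l\ne\lambda$, $q_m\neq\lambda$. Fix $s_l,t_m\in\mathbb{C}$ with $s_l^2=p_l-\lambda$, $t_m^2=q_m-\lambda$ (i.e. $s_l=(p_l-\lambda)^{1/2}$, $t_m=(q_m-\lambda)^{1/2}$), and set $\alpha_l=1/s_l$, $\beta_m=1/t_m$. Let $\phi:\mathbb{Z}^2\to\mathbb{C}$ be a (generic, nonvanishing) solution of \[ \frac{\widetilde{\overline\phi}}{\phi}=\frac{\alpha_l\,\overline\phi-\beta_m\,\widetilde\phi}{\alpha_l\,\widetilde\phi-\beta_m\,\overline\phi}. \] Then \[ u=\frac{s_l\,\overline\phi-t_m\,\widetilde\phi}{\phi},\qquad v=s_l\,\frac{\overline\phi}{\phi} \] satisfy respectively the non-autonomous dKdV equation $\widetilde{\overline u}-u=\frac{q_{m+1}-p_l}{\widetilde u}-\frac{q_m-p_{l+1}}{\overline u}$ and the equation \[ \begin{aligned} &q_m\big(v\overline v-\widetilde v\widetilde{\overline v}\big)^2+\big(v-\widetilde{\overline v}\big)\big(\overline v-\widetilde v\big)\big(\lambda-v\overline v\big)\big(\lambda-\widetilde v\widetilde{\overline v}\big) +\big(p_{l+1}v-p_l\widetilde{\overline v}\big)\big(p_l\overline v-p_{l+1}\widetilde v\big)\\ &\quad-(p_l+p_{l+1})\big(\lambda v\overline v+\lambda\widetilde v\widetilde{\overline v}-2v\overline v\widetilde v\widetilde{\overline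 v}\big) +\big(p_{l+1}v\widetilde v+p_l\overline v\widetilde{\overline v}\big)\big(2\lambda-v\overline v-\widetilde v\widetilde{\overline v}\big)=0. \end{aligned} \]
   Context: Shift notation: for $f:\mathbb{Z}^2\to\mathbb{C}$, $f=f_{l,m}$, $\overline f=f_{l+1,m}$, $\widetilde f=f_{l,m+1}$, $\widetilde{\overline f}=f_{l+1,m+1}$; shifts act on parameters as well ($\overline{p_l}=p_{l+1}$, $\widetilde{q_m}=q_{m+1}$). *)

theory Defs
  imports "HOL-Analysis.Analysis"
begin

end

theory Submission
  imports Defs
begin

text \<open>Clearing denominators, the lattice equation for \<open>\<phi>\<close> becomes the bilinear relation
  \<open>\<phi>(l+1,m+1) (t \<phi>(l,m+1) - s \<phi>(l+1,m)) = \<phi>(l,m) (t \<phi>(l+1,m) - s \<phi>(l,m+1))\<close>.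
  It gives \<open>u\<close> a second expression with denominator \<open>\<phi>(l+1,m+1)\<close>, after which all
  four terms of dKdV are quotients by \<open>\<phi>(l+1,m+1)\<close> and the equation cancels.
  For \<open>v\<close>, the ratio \<open>y = \<phi>(l,m+1) / \<phi>(l,m)\<close> is a root of a quadratic whose
  coefficients are built from \<open>v\<close> and its \<open>m\<close>-shift. Shifting in \<open>l\<close> and using
  \<open>\<phi>(l+1,m+1) / \<phi>(l+1,m) = y v(l,m+1) / v(l,m)\<close> gives a second quadratic with the
  same root; their resultant is the equation for \<open>v\<close>, in a form that no longer
  involves \<open>\<lambda>\<close> once \<open>p = s\<^sup>2 + \<lambda>\<close> and \<open>q = t\<^sup>2 + \<lambda>\<close> are substituted.\<close>

lemma quadratic_common_root_resultant:
  fixes a1 b1 c1 a2 b2 c2 y :: "'a::idom"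
  assumes "a1 * y^2 + b1 * y + c1 = 0" and "a2 * y^2 + b2 * y + c2 = 0"
  shows "(a1 * c2 - a2 * c1)^2 = (a1 * b2 - a2 * b1) * (b1 * c2 - b2 * c1)"
  using assms by algebra

lemma cross_ratio_relation:
  fixes s t a b c d :: "'a::field"
  assumes "s \<noteq> 0" and "t \<noteq> 0" and "c \<noteq> 0" and "d \<noteq> 0"
    and eq: "c / d = (a / s - b / t) / (b / s - a / t)"
  shows "c * (t * b - s * a) = d * (t * a - s * b)"
proof -
  have "b / s - a / t \<noteq> 0"
    using eq \<open>c \<noteq> 0\<close> \<open>d \<noteq> 0\<close> by auto
  then have "c * (b / s - a / t) = d * (a / s - b / t)"
    using eq \<open>d \<noteq> 0\<close> by (simp add: field_simps)
  then show ?thesis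
    using \<open>s \<noteq> 0\<close> \<open>t \<noteq> 0\<close> by (simp add: field_simps)
qed

lemma v_equation_spectral_shift:
  fixes a b c d s0 s1 t lam :: "'a::idom"
  shows "(t^2 + lam) * (a*b - c*d)^2 + (a - d) * (b - c) * (lam - a*b) * (lam - c*d)
         + ((s1^2 + lam) * a - (s0^2 + lam) * d) * ((s0^2 + lam) * b - (s1^2 + lam) * c)
         - ((s0^2 + lam) + (s1^2 + lam)) * (lam * a * b + lam * c * d - 2 * a * b * c * d)
         + ((s1^2 + lam) * a * c + (s0^2 + lam) * b * d) * (2 * lam - a * b - c * d)
       = t^2 * (c*d - a*b)^2 - (a * (c*d - b*d + s1^2) - d * s0^2) * (b*c * (a - d) - b * s0^2 + c * s1^2)"
  by algebra

locale lattice_phi =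
  fixes s t :: "int \<Rightarrow> complex" and \<phi> :: "int \<Rightarrow> int \<Rightarrow> complex"
  assumes s_nonzero: "s l \<noteq> 0"
    and t_nonzero: "t m \<noteq> 0"
    and phi_nonzero: "\<phi> l m \<noteq> 0"
    and phi_relation: "\<phi> (l+1) (m+1) * (t m * \<phi> l (m+1) - s l * \<phi> (l+1) m)
                       = \<phi> l m * (t m * \<phi> (l+1) m - s l * \<phi> l (m+1))"
begin

definition u :: "int \<Rightarrow> int \<Rightarrow> complex"
  where "u l m = (s l * \<phi> (l+1) m - t m * \<phi> l (m+1)) / \<phi> l m"

definition v :: "int \<Rightarrow> int \<Rightarrow> complex"
  where "v l m = s l * \<phi> (l+1) m / \<phi> l m"

lemma u_opposite_corner:
  "u l m = (s l * \<phi> l (m+1) - t m * \<phi> (l+1) m) / \<phi> (l+1) (m+1)"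
  using phi_relation[of l m] phi_nonzero[of l m] phi_nonzero[of "l+1" "m+1"]
  by (simp add: u_def field_simps)

lemma u_mult_phi:
  "u l m * \<phi> l m = s l * \<phi> (l+1) m - t m * \<phi> l (m+1)"
  by (simp add: u_def phi_nonzero)

lemma u_mult_phi_opposite_corner:
  "u l m * \<phi> (l+1) (m+1) = s l * \<phi> l (m+1) - t m * \<phi> (l+1) m"
  by (subst u_opposite_corner) (simp add: phi_nonzero)

lemma u_mult_shift_l:
  "u l m * (s l * \<phi> l m + t m * \<phi> (l+1) (m+1)) = ((s l)^2 - (t m)^2) * \<phi> (l+1) m"
  using u_mult_phi[of l m] u_mult_phi_opposite_corner[of l m] by algebra

lemma u_mult_shift_m:
  "u l m * (t m * \<phi> l m + s l * \<phi> (l+1) (m+1)) = ((s l)^2 - (t m)^2) * \<phi> l (m+1)"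
  using u_mult_phi[of l m] u_mult_phi_opposite_corner[of l m] by algebra

lemma u_dKdV:
  assumes "u l (m+1) \<noteq> 0" and "u (l+1) m \<noteq> 0"
  shows "u (l+1) (m+1) - u l m
         = ((t (m+1))^2 - (s l)^2) / u l (m+1) - ((t m)^2 - (s (l+1))^2) / u (l+1) m"
proof -
  let ?F = "\<phi> (l+1) (m+1)"
  have F: "?F \<noteq> 0" by (rule phi_nonzero)
  have up: "((t (m+1))^2 - (s l)^2) / u l (m+1)
            = - (s l * \<phi> l (m+1) + t (m+1) * \<phi> (l+1) (m+2)) / ?F"
    using u_mult_shift_l[of l "m+1"] F assms(1)
    by (simp add: field_simps add.assoc)
  have right: "((t m)^2 - (s (l+1))^2) / u (l+1) m
               = - (t m * \<phi> (l+1) m + s (l+1) * \<phi> (l+2) (m+1)) / ?F"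
    using u_mult_shift_m[of "l+1" m] F assms(2)
    by (simp add: field_simps add.assoc)
  have corner: "u (l+1) (m+1) = (s (l+1) * \<phi> (l+2) (m+1) - t (m+1) * \<phi> (l+1) (m+2)) / ?F"
    by (simp add: u_def add.assoc)
  show ?thesis
    unfolding up right corner u_opposite_corner[of l m] using F by (simp add: field_simps)
qed

lemma v_nonzero: "v l m \<noteq> 0"
  by (simp add: v_def s_nonzero phi_nonzero)

lemma phi_ratio_quadratic:
  fixes l m :: int
  defines "y \<equiv> \<phi> l (m+1) / \<phi> l m"
  shows "t m * v l (m+1) * y^2 - (v l m * v l (m+1) - (s l)^2) * y - t m * v l m = 0"
proof -
  have "t m * v l (m+1) * y^2 - (v l m * v l (m+1) - (s l)^2) * y - t m * v l m
        = s l / (\<phi> l m)^2 * (\<phi> (l+1) (m+1) * (t m * \<phi> l (m+1) - s l * \<phi> (l+1) m)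
                               - \<phi> l m * (t m * \<phi> (l+1) m - s l * \<phi> l (m+1)))"
    using phi_nonzero[of l m] phi_nonzero[of l "m+1"]
    by (simp add: y_def v_def field_simps power2_eq_square)
  then show ?thesis
    using phi_relation[of l m] by simp
qed

lemma phi_ratio_shift_l:
  "\<phi> (l+1) (m+1) / \<phi> (l+1) m * v l m = v l (m+1) * (\<phi> l (m+1) / \<phi> l m)"
  using phi_nonzero[of l m] phi_nonzero[of l "m+1"] phi_nonzero[of "l+1" m]
  by (simp add: v_def field_simps)

lemma v_lattice_equation:
  "(t m)^2 * (v l (m+1) * v (l+1) (m+1) - v l m * v (l+1) m)^2
   = (v l m * (v l (m+1) * v (l+1) (m+1) - v (l+1) m * v (l+1) (m+1) + (s (l+1))^2)
        - v (l+1) (m+1) * (s l)^2)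
     * (v (l+1) m * v l (m+1) * (v l m - v (l+1) (m+1)) - v (l+1) m * (s l)^2
        + v l (m+1) * (s (l+1))^2)"
proof -
  define y where "y = \<phi> l (m+1) / \<phi> l m"
  define z where "z = \<phi> (l+1) (m+1) / \<phi> (l+1) m"
  note E1 = phi_ratio_quadratic[where l=l and m=m, folded y_def]
  note E2 = phi_ratio_quadratic[where l="l+1" and m=m, folded z_def]
  have yz: "z * v l m = v l (m+1) * y"
    unfolding y_def z_def by (rule phi_ratio_shift_l)
  have "(v l m)^2 * (t m * v (l+1) (m+1) * z^2 - (v (l+1) m * v (l+1) (m+1) - (s (l+1))^2) * z
          - t m * v (l+1) m) = 0"
    using E2 by simp
  then have E2': "(t m * v (l+1) (m+1) * (v l (m+1))^2) * y^2
      + (- (v (l+1) m * v (l+1) (m+1) - (s (l+1))^2) * v l (m+1) * v l m) * y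
      + (- t m * v (l+1) m * (v l m)^2) = 0"
    using yz by algebra
  have E1': "(t m * v l (m+1)) * y^2 + (- (v l m * v l (m+1) - (s l)^2)) * y + (- t m * v l m) = 0"
    using E1 by algebra
  from quadratic_common_root_resultant[OF E1' E2']
  have "(t m * v l m * v l (m+1))^2 * ((t m)^2 * (v l (m+1) * v (l+1) (m+1) - v l m * v (l+1) m)^2
   - (v l m * (v l (m+1) * v (l+1) (m+1) - v (l+1) m * v (l+1) (m+1) + (s (l+1))^2)
        - v (l+1) (m+1) * (s l)^2)
     * (v (l+1) m * v l (m+1) * (v l m - v (l+1) (m+1)) - v (l+1) m * (s l)^2
        + v l (m+1) * (s (l+1))^2)) = 0"
    by algebra
  then show ?thesis
    using t_nonzero[of m] v_nonzero[of l m] v_nonzero[of l "m+1"] by simp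
qed

end

theorem mainTheorem9:
  fixes lam :: complex
    and p q s t :: "int \<Rightarrow> complex"
    and \<phi> :: "int \<Rightarrow> int \<Rightarrow> complex"
    and u v :: "int \<Rightarrow> int \<Rightarrow> complex"
  assumes hp: "\<And>l. p l \<noteq> lam"
    and hq: "\<And>m. q m \<noteq> lam"
    and hs: "\<And>l. (s l)\<^sup>2 = p l - lam"
    and ht: "\<And>m. (t m)\<^sup>2 = q m - lam"
    and h\<phi>0: "\<And>l m. \<phi> l m \<noteq> 0"
    and h\<phi>: "\<And>l m. \<phi> (l+1) (m+1) / \<phi> l m
               = ((1 / s l) * \<phi> (l+1) m - (1 / t m) * \<phi> l (m+1))
                 / ((1 / s l) * \<phi> l (m+1) - (1 / t m) * \<phi> (l+1) m)"
    and u_def: "u \<equiv> \<lambda>l m. (s l * \<phi> (l+1) m - t m * \<phi> l (m+1)) / \<phi> l m"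
    and v_def: "v \<equiv> \<lambda>l m. s l * \<phi> (l+1) m / \<phi> l m"
    and hu0: "\<And>l m. u l m \<noteq> 0"
  shows "(\<forall>l m. u (l+1) (m+1) - u l m
                 = (q (m+1) - p l) / u l (m+1) - (q m - p (l+1)) / u (l+1) m)
    \<and> (\<forall>l m.
           q m * (v l m * v (l+1) m - v l (m+1) * v (l+1) (m+1))\<^sup>2
         + (v l m - v (l+1) (m+1)) * (v (l+1) m - v l (m+1))
             * (lam - v l m * v (l+1) m) * (lam - v l (m+1) * v (l+1) (m+1))
         + (p (l+1) * v l m - p l * v (l+1) (m+1)) * (p l * v (l+1) m - p (l+1) * v l (m+1))
         - (p l + p (l+1)) * (lam * v l m * v (l+1) m + lam * v l (m+1) * v (l+1) (m+1)
                              - 2 * v l m * v (l+1) m * v l (m+1) * v (l+1) (m+1))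
         + (p (l+1) * v l m * v l (m+1) + p l * v (l+1) m * v (l+1) (m+1))
             * (2 * lam - v l m * v (l+1) m - v l (m+1) * v (l+1) (m+1)) = 0)"
proof -
  have s_nonzero: "s l \<noteq> 0" for l using hs[of l] hp[of l] by auto
  have t_nonzero: "t m \<noteq> 0" for m using ht[of m] hq[of m] by auto
  interpret L: lattice_phi s t \<phi>
  proof
    show "\<phi> (l+1) (m+1) * (t m * \<phi> l (m+1) - s l * \<phi> (l+1) m)
          = \<phi> l m * (t m * \<phi> (l+1) m - s l * \<phi> l (m+1))" for l m
      by (rule cross_ratio_relation[OF s_nonzero t_nonzero h\<phi>0 h\<phi>0])
        (simp add: h\<phi>[of l m])
  qed (fact s_nonzero t_nonzero h\<phi>0)+
  have u: "u = L.u" and v: "v = L.v"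
    by (simp_all add: u_def v_def fun_eq_iff L.u_def L.v_def)
  have p: "p l = (s l)^2 + lam" and q: "q m = (t m)^2 + lam" for l m
    using hs[of l] ht[of m] by simp_all
  show ?thesis
    unfolding u v p q v_equation_spectral_shift
    using L.u_dKdV hu0[unfolded u] L.v_lattice_equation by simp
qed

end
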